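(* Let $A:[0,T]\to\mathbb{C}^{m\times m}$ be continuous. (i) If $\big[A(t),\int_0^tA(s)ds\big]=0$ for all $t\in[0,T]$, then $\Omega_k\equiv0$ on $[0,T]$ for all $k>1$, so $\Omega(t)=\int_0^tA(s)ds$. (ii) More generally, if for some $n\ge1$, $[A(s_1),[A(s_2),[\cdots,[A(s_n),A(s_{n+1})]\cdots]]]=0$ for all $s_1,\dots,s_{n+1}\in[0,T]$, then $\Omega_k\equiv0$ on $[0,T]$ for all $k>n$.
   Context: Magnus terms: $\Omega_1(t)=\int_0^tA(s)ds$ and for $n\ge2$, $\Omega_n(t)=\sum_{j=1}^{n-1}\frac{B_j}{j!}\sum_{k_1+\cdots+k_j=n-1,\ k_i\ge1}\int_0^t\mathrm{ad}_{\Omega_{k_1}(s)}\cdots\mathrm{ad}_{\Omega_{k_j}(s)}A(s)\,ds$, where $\mathrm{ad}_XY=[X,Y]=XY-YX$ and $\frac{x}{e^x-1}=\sum_j\frac{B_j}{j!}x^j$. $\Omega=\sum_k\Omega_k$. *)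

theory Defs
  imports "HOL-Analysis.Analysis" "HOL-Computational_Algebra.Formal_Power_Series"
begin

definition ad :: "complex^'m^'m \<Rightarrow> complex^'m^'m \<Rightarrow> complex^'m^'m" where
  "ad X Y = X ** Y - Y ** X"

text \<open>The coefficient \<open>B_j / j!\<close> of \<open>x/(e^x - 1)\<close>.\<close>
definition bern_coeff :: "nat \<Rightarrow> real" where
  "bern_coeff j = fps_nth (fps_X / (fps_exp 1 - 1)) j"

definition compositions :: "nat \<Rightarrow> nat \<Rightarrow> nat list set" where
  "compositions j N = {ks. length ks = j \<and> (\<forall>k\<in>set ks. 1 \<le> k) \<and> sum_list ks = N}"

text \<open>One step of the Magnus recursion: given (a table W containing) Omega_1..Omega_(n-1),
  compute Omega_n.\<close>
definition magnus_step ::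
  "(real \<Rightarrow> complex^'m^'m) \<Rightarrow> (nat \<Rightarrow> real \<Rightarrow> complex^'m^'m) \<Rightarrow> nat \<Rightarrow> real \<Rightarrow> complex^'m^'m" where
  "magnus_step A W n t =
     (if n = 1 then integral {0..t} A
      else (\<Sum>j=1..n-1. bern_coeff j *\<^sub>R
              (\<Sum>ks\<in>compositions j (n-1).
                 integral {0..t} (\<lambda>s. foldr (\<lambda>k Y. ad (W k s) Y) ks (A s)))))"

primrec magnus_tab ::
  "(real \<Rightarrow> complex^'m^'m) \<Rightarrow> nat \<Rightarrow> nat \<Rightarrow> real \<Rightarrow> complex^'m^'m" where
  "magnus_tab A 0 = (\<lambda>k t. 0)"
| "magnus_tab A (Suc n) = (magnus_tab A n)(Suc n := magnus_step A (magnus_tab A n) (Suc n))"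

text \<open>The Magnus term Omega_n (for n \<ge> 1; Omega_0 = 0 by convention).\<close>
definition magnus :: "(real \<Rightarrow> complex^'m^'m) \<Rightarrow> nat \<Rightarrow> real \<Rightarrow> complex^'m^'m" where
  "magnus A n = magnus_tab A n n"

end

theory Submission imports Defs begin

(*
  Part (ii) is a grading argument.  Let L_d be the linear span of all right-nested
  commutators [A(s_1),[A(s_2),[...,[A(s_l),A(s)]...]]] with at least d factors
  (l + 1 \<ge> d) and all points in [0,T]; these subspaces form the lower central series
  of the Lie algebra generated by the values of A.  By the Jacobi identity
  [L_a, L_b] \<subseteq> L_(a+b), and since integrals of functions with values in a subspace
  stay in it, the Magnus recursion puts Omega_k(t) into L_k.  The hypothesis of (ii)
  says that every commutator with n+1 factors vanishes, hence L_(n+1) = 0, and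
  Omega_k = 0 for k > n.

  Part (i) is a direct induction: a term of the recursion for Omega_k with k > 1 either
  contains some Omega_i with 1 < i < k, which vanishes by induction, or is an iterated
  commutator whose innermost bracket is [Omega_1(s), A(s)] = 0.
*)

abbreviation ad_chain :: "('a \<Rightarrow> complex^'m^'m) \<Rightarrow> 'a list \<Rightarrow> complex^'m^'m \<Rightarrow> complex^'m^'m" where
  "ad_chain W ks Y \<equiv> foldr (\<lambda>k Y. ad (W k) Y) ks Y"


lemma matrix_mult_diff_rdistrib: "((X::complex^'m^'m) - Y) ** Z = X ** Z - Y ** Z"
  by (simp add: matrix_matrix_mult_def vec_eq_iff sum_subtractf algebra_simps)

lemma matrix_mult_diff_ldistrib: "(Z::complex^'m^'m) ** (X - Y) = Z ** X - Z ** Y"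
  by (simp add: matrix_matrix_mult_def vec_eq_iff sum_subtractf algebra_simps)

lemma matrix_mult_add_rdistrib: "((X::complex^'m^'m) + Y) ** Z = X ** Z + Y ** Z"
  by (simp add: matrix_matrix_mult_def vec_eq_iff sum.distrib algebra_simps)

lemma matrix_mult_scaleR_left: "(r *\<^sub>R (X::complex^'m^'m)) ** Z = r *\<^sub>R (X ** Z)"
  and matrix_mult_scaleR_right: "(X::complex^'m^'m) ** (r *\<^sub>R Z) = r *\<^sub>R (X ** Z)"
  by (simp_all add: matrix_matrix_mult_def vec_eq_iff scaleR_sum_right)

lemma linear_ad_right: "linear (ad X)"
  by (rule linearI)
    (simp_all add: ad_def matrix_add_ldistrib matrix_mult_add_rdistrib
      matrix_mult_scaleR_left matrix_mult_scaleR_right algebra_simps)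

lemma linear_ad_left: "linear (\<lambda>X. ad X Z)"
  by (rule linearI)
    (simp_all add: ad_def matrix_add_ldistrib matrix_mult_add_rdistrib
      matrix_mult_scaleR_left matrix_mult_scaleR_right algebra_simps)

lemma ad_zero_left [simp]: "ad 0 X = 0"
  and ad_zero_right [simp]: "ad X 0 = 0"
  by (simp_all add: ad_def)

lemma ad_antisym: "ad X Y = - ad Y X"
  by (simp add: ad_def)

lemma ad_jacobi: "ad (ad X Y) Z = ad X (ad Y Z) - ad Y (ad X Z)"
  by (simp add: ad_def matrix_mult_diff_rdistrib matrix_mult_diff_ldistrib
      matrix_mul_assoc algebra_simps)

lemma ad_chain_zero: "ad_chain W ks 0 = 0"
  by (induction ks) auto

lemma ad_chain_commuting:
  assumes "ks \<noteq> []" and "\<forall>k\<in>set ks. k = 1 \<or> W k = 0" and "ad (W 1) Y = 0"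
  shows "ad_chain W ks Y = 0"
  using assms(1,2)
proof (induction ks)
  case (Cons k ks)
  then show ?case
    using assms(3) by (cases "ks = []") auto
qed simp


text \<open>An integral of a function with values in a subspace lies in that subspace: the
  subspace is its own double orthogonal complement, and integration commutes with
  inner products.\<close>
lemma integral_in_subspace:
  fixes f :: "real \<Rightarrow> 'a::euclidean_space"
  assumes U: "subspace U" and f: "\<And>x. x \<in> S \<Longrightarrow> f x \<in> U"
  shows "integral S f \<in> U"
proof (cases "f integrable_on S")
  case False
  then show ?thesis using U by (simp add: not_integrable_integral subspace_0)
next
  case True
  have "integral S f \<in> U\<^sup>\<bottom>\<^sup>\<bottom>"
  proof (unfold orthogonal_comp_def orthogonal_def, intro CollectI ballI)
    fix y assume "y \<in> {x. \<forall>y\<in>U. y \<bullet> x = 0}"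
    then have y: "\<forall>z\<in>U. y \<bullet> z = 0" by (simp add: inner_commute)
    have "y \<bullet> integral S f = integral S ((\<lambda>v. y \<bullet> v) \<circ> f)"
      by (rule integral_linear[OF True bounded_linear_inner_right, symmetric])
    also have "\<dots> = integral S (\<lambda>x. 0)"
      using y f by (intro integral_cong) auto
    finally show "y \<bullet> integral S f = 0" by simp
  qed
  then show ?thesis using orthogonal_comp_self[OF U] by simp
qed


lemma magnus_tab_stable: "k \<le> N \<Longrightarrow> magnus_tab A N k = magnus A k"
  unfolding magnus_def by (induction N) (auto simp: le_Suc_eq)

lemma magnus_eq_step: "n \<ge> 1 \<Longrightarrow> magnus A n = magnus_step A (magnus_tab A (n - 1)) n"
  by (cases n) (auto simp: magnus_def)

lemma magnus_one: "magnus A (Suc 0) t = integral {0..t} A"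
  by (simp add: magnus_eq_step magnus_step_def)

lemma compositions_parts:
  assumes "ks \<in> compositions j N" and "k \<in> set ks"
  shows "1 \<le> k" and "k \<le> N"
  using assms member_le_sum_list[OF assms(2)] by (auto simp: compositions_def)

lemma compositions_nonempty: "ks \<in> compositions j N \<Longrightarrow> 1 \<le> j \<Longrightarrow> ks \<noteq> []"
  by (auto simp: compositions_def)

lemma magnus_recursion:
  assumes "n \<ge> 2"
  shows "magnus A n t =
    (\<Sum>j=1..n-1. bern_coeff j *\<^sub>R
       (\<Sum>ks\<in>compositions j (n-1).
          integral {0..t} (\<lambda>s. ad_chain (\<lambda>k. magnus A k s) ks (A s))))"
proof -
  have "ad_chain (\<lambda>k. magnus_tab A (n-1) k s) ks (A s) = ad_chain (\<lambda>k. magnus A k s) ks (A s)"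
    if "ks \<in> compositions j (n-1)" for ks j s
    using compositions_parts(2)[OF that] by (intro foldr_cong) (auto simp: magnus_tab_stable)
  then show ?thesis
    using assms by (simp add: magnus_eq_step magnus_step_def)
qed


subsection \<open>The lower central filtration and part (ii)\<close>

definition lower_central :: "(real \<Rightarrow> complex^'m^'m) \<Rightarrow> real set \<Rightarrow> nat \<Rightarrow> (complex^'m^'m) set" where
  "lower_central A S d = span {ad_chain A ss (A s) | ss s.
       d \<le> length ss + 1 \<and> set ss \<subseteq> S \<and> s \<in> S}"

lemma subspace_lower_central: "subspace (lower_central A S d)"
  unfolding lower_central_def by (rule subspace_span)

lemma lower_central_antimono: "d \<le> e \<Longrightarrow> lower_central A S e \<subseteq> lower_central A S d"
  unfolding lower_central_def by (rule span_mono) (fastforce intro: le_trans)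

lemma ad_chain_in_lower_central:
  "set ss \<subseteq> S \<Longrightarrow> s \<in> S \<Longrightarrow> ad_chain A ss (A s) \<in> lower_central A S (length ss + 1)"
  unfolding lower_central_def by (rule span_base) blast

lemma value_in_lower_central: "s \<in> S \<Longrightarrow> A s \<in> lower_central A S 1"
  using ad_chain_in_lower_central[of "[]"] by simp

lemma ad_value_lower_central:
  assumes "X \<in> lower_central A S e" and "x \<in> S"
  shows "ad (A x) X \<in> lower_central A S (Suc e)"
proof -
  let ?G = "\<lambda>d. {ad_chain A ss (A s) | ss s. d \<le> length ss + 1 \<and> set ss \<subseteq> S \<and> s \<in> S}"
  have "ad (A x) ` ?G e \<subseteq> ?G (Suc e)"
  proof
    fix y assume "y \<in> ad (A x) ` ?G e"
    then obtain ss s where "e \<le> length ss + 1" "set ss \<subseteq> S" "s \<in> S"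
      and "y = ad (A x) (ad_chain A ss (A s))" by blast
    then show "y \<in> ?G (Suc e)"
      using assms(2) by (intro CollectI exI[of _ "x # ss"] exI[of _ s]) auto
  qed
  have "ad (A x) ` span (?G e) = span (ad (A x) ` ?G e)"
    by (rule linear_span_image[OF linear_ad_right, symmetric])
  also have "\<dots> \<subseteq> span (?G (Suc e))"
    by (rule span_mono) fact
  finally show ?thesis
    using assms(1) by (auto simp: lower_central_def)
qed

text \<open>Commutation with a nested commutator of \<open>l\<close> values raises the degree by \<open>l\<close>;
  induction on the commutator via the Jacobi identity.\<close>
lemma ad_chain_lower_central:
  assumes "set ss \<subseteq> S" and "s \<in> S" and "Z \<in> lower_central A S b"
  shows "ad (ad_chain A ss (A s)) Z \<in> lower_central A S (length ss + 1 + b)"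
  using assms(1,3)
proof (induction ss arbitrary: Z b)
  case Nil
  then show ?case using ad_value_lower_central[OF Nil(2) assms(2)] by simp
next
  case (Cons x ss)
  let ?Y = "ad_chain A ss (A s)"
  have x: "x \<in> S" and ss: "set ss \<subseteq> S" using Cons.prems by auto
  have "ad (A x) (ad ?Y Z) \<in> lower_central A S (length (x # ss) + 1 + b)"
    using ad_value_lower_central[OF Cons.IH[OF ss Cons.prems(2)] x] by simp
  moreover have "ad ?Y (ad (A x) Z) \<in> lower_central A S (length (x # ss) + 1 + b)"
    using Cons.IH[OF ss ad_value_lower_central[OF Cons.prems(2) x]] by simp
  ultimately show ?case
    using subspace_diff[OF subspace_lower_central] by (simp add: ad_jacobi)
qed

lemma ad_lower_central:
  assumes "X \<in> lower_central A S a" and "Z \<in> lower_central A S b"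
  shows "ad X Z \<in> lower_central A S (a + b)"
proof -
  let ?G = "{ad_chain A ss (A s) | ss s. a \<le> length ss + 1 \<and> set ss \<subseteq> S \<and> s \<in> S}"
  have "span ?G \<subseteq> (\<lambda>X. ad X Z) -` lower_central A S (a + b)"
  proof (rule span_minimal)
    show "subspace ((\<lambda>X. ad X Z) -` lower_central A S (a + b))"
      by (rule linear_subspace_vimage[OF linear_ad_left subspace_lower_central])
    show "?G \<subseteq> (\<lambda>X. ad X Z) -` lower_central A S (a + b)"
    proof
      fix y assume "y \<in> ?G"
      then obtain ss s where h: "a \<le> length ss + 1" "set ss \<subseteq> S" "s \<in> S"
        and y: "y = ad_chain A ss (A s)" by blast
      have "ad y Z \<in> lower_central A S (length ss + 1 + b)"
        using y ad_chain_lower_central[OF h(2,3) assms(2)] by simp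
      also have "\<dots> \<subseteq> lower_central A S (a + b)"
        using h(1) by (intro lower_central_antimono) simp
      finally show "y \<in> (\<lambda>X. ad X Z) -` lower_central A S (a + b)" by simp
    qed
  qed
  then show ?thesis using assms(1) by (auto simp: lower_central_def)
qed

lemma lower_central_vanishes:
  assumes nilpotent: "\<forall>ss s. length ss = n \<and> set ss \<subseteq> S \<and> s \<in> S \<longrightarrow> ad_chain A ss (A s) = 0"
  shows "lower_central A S (Suc n) = {0}"
proof -
  have "ad_chain A ss (A s) = 0"
    if "Suc n \<le> length ss + 1" "set ss \<subseteq> S" "s \<in> S" for ss s
  proof -
    let ?m = "length ss - n"
    have "ad_chain A (drop ?m ss) (A s) = 0"
      using nilpotent that set_drop_subset[of ?m ss] by auto
    then have "ad_chain A (take ?m ss @ drop ?m ss) (A s) = 0"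
      by (simp only: foldr_append) (simp add: ad_chain_zero)
    then show ?thesis by simp
  qed
  then have "lower_central A S (Suc n) \<subseteq> span {0}"
    unfolding lower_central_def by (intro span_mono) blast
  then show ?thesis
    using subspace_0[OF subspace_lower_central] by auto
qed

lemma ad_chain_graded:
  assumes "s \<in> S" and "\<And>k. k \<in> set ks \<Longrightarrow> W k \<in> lower_central A S k"
  shows "ad_chain W ks (A s) \<in> lower_central A S (sum_list ks + 1)"
  using assms(2)
proof (induction ks)
  case Nil
  then show ?case using value_in_lower_central[OF assms(1)] by simp
next
  case (Cons k ks)
  then show ?case
    using ad_lower_central[OF Cons.prems[of k] Cons.IH] by (simp add: add.assoc)
qed

lemma magnus_in_lower_central:
  assumes "k \<ge> 1" and "{0..t} \<subseteq> S"
  shows "magnus A k t \<in> lower_central A S k"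
  using assms
proof (induction k arbitrary: t rule: less_induct)
  case (less k)
  show ?case
  proof (cases "k = 1")
    case True
    then show ?thesis
      using less.prems(2) value_in_lower_central
      by (auto simp: magnus_one intro!: integral_in_subspace[OF subspace_lower_central])
  next
    case False
    have "ad_chain (\<lambda>i. magnus A i s) ks (A s) \<in> lower_central A S k"
      if ks: "ks \<in> compositions j (k - 1)" and s: "s \<in> {0..t}" for j ks s
    proof -
      have "{0..s} \<subseteq> S" using s less.prems(2) by auto
      then have "magnus A i s \<in> lower_central A S i" if "i \<in> set ks" for i
        using less.IH compositions_parts[OF ks that] False less.prems(1) by auto
      moreover have "sum_list ks + 1 = k"
        using ks less.prems(1) by (auto simp: compositions_def)
      ultimately show ?thesis
        using ad_chain_graded[where W = "\<lambda>i. magnus A i s"] s less.prems(2) by auto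
    qed
    then show ?thesis
      using False less.prems(1)
      by (auto simp: magnus_recursion intro!: subspace_sum[OF subspace_lower_central]
          subspace_scale[OF subspace_lower_central] integral_in_subspace[OF subspace_lower_central])
  qed
qed


lemma magnus_vanishes_commuting:
  assumes commuting: "\<forall>t\<in>{0..T}. ad (A t) (integral {0..t} A) = 0"
  shows "k > 1 \<Longrightarrow> t \<in> {0..T} \<Longrightarrow> magnus A k t = 0"
proof (induction k arbitrary: t rule: less_induct)
  case (less k)
  have "ad_chain (\<lambda>i. magnus A i s) ks (A s) = 0"
    if j: "j \<in> {1..k-1}" and ks: "ks \<in> compositions j (k - 1)" and s: "s \<in> {0..t}" for j ks s
  proof (rule ad_chain_commuting)
    have sT: "s \<in> {0..T}" using s less.prems(2) by auto
    show "ks \<noteq> []" using compositions_nonempty[OF ks] j by simp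
    show "\<forall>i\<in>set ks. i = 1 \<or> magnus A i s = 0"
    proof
      fix i assume "i \<in> set ks"
      then have "1 \<le> i" "i < k"
        using compositions_parts[OF ks] less.prems(1) by fastforce+
      then show "i = 1 \<or> magnus A i s = 0"
        using less.IH[OF \<open>i < k\<close> _ sT] by fastforce
    qed
    show "ad (magnus A 1 s) (A s) = 0"
      using commuting sT ad_antisym[of "integral {0..s} A" "A s"] by (simp add: magnus_one)
  qed
  then have "integral {0..t} (\<lambda>s. ad_chain (\<lambda>i. magnus A i s) ks (A s)) = 0"
    if "j \<in> {1..k-1}" and "ks \<in> compositions j (k - 1)" for j ks
    using that by (subst integral_cong[where g = "\<lambda>_. 0"]) auto
  then show ?case
    using less.prems(1) by (simp add: magnus_recursion)
qed


theorem mainTheorem10: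
  fixes A :: "real \<Rightarrow> complex^'m^'m" and T :: real
  assumes cont: "continuous_on {0..T} A"
  shows "((\<forall>t\<in>{0..T}. ad (A t) (integral {0..t} A) = 0) \<longrightarrow>
            (\<forall>k>1. \<forall>t\<in>{0..T}. magnus A k t = 0) \<and>
            (\<forall>t\<in>{0..T}. (\<lambda>k. magnus A (Suc k) t) sums integral {0..t} A))
       \<and> (\<forall>n\<ge>1. (\<forall>ss s. length ss = n \<and> set ss \<subseteq> {0..T} \<and> s \<in> {0..T} \<longrightarrow>
                        foldr (\<lambda>x Y. ad (A x) Y) ss (A s) = 0) \<longrightarrow>
            (\<forall>k>n. \<forall>t\<in>{0..T}. magnus A k t = 0))"
proof (intro conjI impI)
  assume commuting: "\<forall>t\<in>{0..T}. ad (A t) (integral {0..t} A) = 0"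
  show "\<forall>k>1. \<forall>t\<in>{0..T}. magnus A k t = 0"
    using magnus_vanishes_commuting[OF commuting] by blast
  show "\<forall>t\<in>{0..T}. (\<lambda>k. magnus A (Suc k) t) sums integral {0..t} A"
  proof
    fix t assume t: "t \<in> {0..T}"
    have "(\<lambda>k. magnus A (Suc k) t) = (\<lambda>k. if k = 0 then integral {0..t} A else 0)"
      using magnus_vanishes_commuting[OF commuting _ t] by (auto simp: magnus_one)
    then show "(\<lambda>k. magnus A (Suc k) t) sums integral {0..t} A"
      using sums_single[of 0 "\<lambda>_. integral {0..t} A"] by simp
  qed
next
  show "\<forall>n\<ge>1. (\<forall>ss s. length ss = n \<and> set ss \<subseteq> {0..T} \<and> s \<in> {0..T} \<longrightarrow>
                        foldr (\<lambda>x Y. ad (A x) Y) ss (A s) = 0) \<longrightarrow>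
            (\<forall>k>n. \<forall>t\<in>{0..T}. magnus A k t = 0)"
  proof (intro allI impI ballI)
    fix n k t
    assume nilpotent: "\<forall>ss s. length ss = n \<and> set ss \<subseteq> {0..T} \<and> s \<in> {0..T} \<longrightarrow>
                         foldr (\<lambda>x Y. ad (A x) Y) ss (A s) = 0"
      and "n < k" and "t \<in> {0..T}"
    then have "magnus A k t \<in> lower_central A {0..T} k"
      by (intro magnus_in_lower_central) auto
    also have "\<dots> \<subseteq> lower_central A {0..T} (Suc n)"
      using \<open>n < k\<close> by (intro lower_central_antimono) simp
    finally show "magnus A k t = 0"
      using lower_central_vanishes[OF nilpotent] by simp
  qed
qed

end
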